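(* Let $\Theta$ be an inner function and let $a\in\mathbb D$, $a\ne0$, be such that $\Theta(-a)\ne0$. Define $\widetilde\Theta=\Theta\circ\varphi_a$. Let $f\in K_\Theta$ and $g=f\circ\varphi_a$. Then there exists $c_f\in\mathbb C$ such that $g-c_f\in K_{\widetilde\Theta}$.
   Context: $\mathbb D$ is the unit disc, $H^2$ the Hardy space on $\mathbb D$, and for an inner function $\Theta$, $K_\Theta=H^2\ominus\Theta H^2$. For $a\in\mathbb D$, $\varphi_a(z)=\frac{z-a}{1-\overline a z}$. *)

theory Defs
  imports "HOL-Analysis.Analysis"
begin

abbreviation unit_disc :: "complex set" where
  "unit_disc \<equiv> ball 0 1"

definition moebius :: "complex \<Rightarrow> complex \<Rightarrow> complex" where
  "moebius a z = (z - a) / (1 - cnj a * z)"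

definition taylor_coeff :: "(complex \<Rightarrow> complex) \<Rightarrow> nat \<Rightarrow> complex" where
  "taylor_coeff f n = (deriv ^^ n) f 0 / of_nat (fact n)"

definition H2 :: "(complex \<Rightarrow> complex) set" where
  "H2 = {f. f holomorphic_on unit_disc \<and> summable (\<lambda>n. (norm (taylor_coeff f n))\<^sup>2)}"

definition h2_inner :: "(complex \<Rightarrow> complex) \<Rightarrow> (complex \<Rightarrow> complex) \<Rightarrow> complex" where
  "h2_inner f g = (\<Sum>n. taylor_coeff f n * cnj (taylor_coeff g n))"

definition inner_fun :: "(complex \<Rightarrow> complex) \<Rightarrow> bool" where
  "inner_fun \<Theta> \<longleftrightarrow> \<Theta> holomorphic_on unit_disc
     \<and> (\<exists>M. \<forall>z\<in>unit_disc. norm (\<Theta> z) \<le> M)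
     \<and> (AE t in lebesgue_on {0..2*pi}.
          \<exists>L. ((\<lambda>r. \<Theta> (of_real r * cis t)) \<longlongrightarrow> L) (at_left 1) \<and> norm L = 1)"

definition model_space :: "(complex \<Rightarrow> complex) \<Rightarrow> (complex \<Rightarrow> complex) set" where
  "model_space \<Theta> = {f \<in> H2. \<forall>h\<in>H2. h2_inner f (\<lambda>z. \<Theta> z * h z) = 0}"

end

theory Submission
  imports Defs "HOL-Complex_Analysis.Complex_Analysis"
begin

text \<open>
  Composition with \<open>\<phi>\<^sub>a\<close> rescales the inner product of \<open>H2\<close> by a multiplier: with the Szego
  kernel \<open>k(z) = 1 / (1 + cnj a * z)\<close> of \<open>- a\<close>,
  \<open>\<langle>F \<circ> \<phi>\<^sub>a, H \<circ> \<phi>\<^sub>a\<rangle> = (1 - \<bar>a\<bar>\<^sup>2) \<langle>k F, k H\<rangle>\<close>.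
  For polynomials both sides are integrals over the unit circle, and they agree because both
  measures have the moments \<open>(- a)\<^sup>j\<close>: for the first by the mean value property of \<open>\<phi>\<^sub>a\<^sup>j\<close>, for
  the second (a Poisson kernel) by Cauchy's formula. The identity extends to \<open>H2\<close> by density of
  the Taylor polynomials, since composition with \<open>\<phi>\<^sub>a\<close> is bounded on \<open>H2\<close>.

  Substituting \<open>h = u \<circ> \<phi>\<^sub>a\<close>, the claim \<open>g - c \<perp> (\<Theta> \<circ> \<phi>\<^sub>a) H2\<close> becomes \<open>k (f - c) \<perp> \<Theta> H2\<close>.
  Writing \<open>\<Theta> w = (z + a) X + \<Theta>(-a) w(-a)\<close> with the difference quotient \<open>X\<close> of \<open>\<Theta> w\<close> at \<open>- a\<close>,
  and using \<open>\<langle>k F, (z + a) X\<rangle> = \<langle>F, z X\<rangle>\<close>, the inner product \<open>\<langle>k (f - c), \<Theta> w\<rangle>\<close> equals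
  \<open>cnj (w(-a))\<close> times \<open>\<langle>f, z D\<Theta>\<rangle> - (c - f(0)) cnj (\<Theta>(-a))\<close>, where \<open>D\<Theta>\<close> is the difference
  quotient of \<open>\<Theta>\<close> at \<open>- a\<close>; the constant \<open>c\<close> is chosen to make this vanish.
\<close>

section \<open>Taylor coefficients\<close>

lemma taylor_coeff_eq_fps_nth: "taylor_coeff f n = fps_nth (fps_expansion f 0) n"
  by (simp add: taylor_coeff_def fps_expansion_def)

lemma taylor_coeff_of_fps_expansion:
  assumes "f has_fps_expansion F"
  shows "taylor_coeff f n = fps_nth F n"
  using fps_nth_fps_expansion[OF assms] by (simp add: taylor_coeff_def)

lemma holomorphic_on_ball_has_fps_expansion:
  assumes "f holomorphic_on ball 0 r" "0 < r"
  shows "f has_fps_expansion fps_expansion f 0"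
  using assms by (intro has_fps_expansion_fps_expansion) auto

lemma taylor_coeff_0: "taylor_coeff f 0 = f 0"
  by (simp add: taylor_coeff_def)

lemma taylor_coeff_const: "taylor_coeff (\<lambda>z. c) n = (if n = 0 then c else 0)"
  using taylor_coeff_of_fps_expansion[OF has_fps_expansion_const[of c]] by simp

lemma taylor_coeff_cong:
  assumes "\<And>z. z \<in> ball 0 r \<Longrightarrow> f z = g z" "0 < r"
  shows "taylor_coeff f n = taylor_coeff g n"
proof -
  have "eventually (\<lambda>z. f z = g z) (nhds 0)"
    using eventually_nhds_in_open[of "ball 0 r" 0] assms by (auto elim!: eventually_mono)
  then show ?thesis
    unfolding taylor_coeff_def using higher_deriv_cong_ev by metis
qed

lemma taylor_coeff_add:
  assumes "f holomorphic_on ball 0 r" "g holomorphic_on ball 0 r" "0 < r"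
  shows "taylor_coeff (\<lambda>z. f z + g z) n = taylor_coeff f n + taylor_coeff g n"
  using taylor_coeff_of_fps_expansion[OF has_fps_expansion_add[OF
      holomorphic_on_ball_has_fps_expansion[OF assms(1,3)]
      holomorphic_on_ball_has_fps_expansion[OF assms(2,3)]]]
  by (simp add: taylor_coeff_eq_fps_nth)

lemma taylor_coeff_diff:
  assumes "f holomorphic_on ball 0 r" "g holomorphic_on ball 0 r" "0 < r"
  shows "taylor_coeff (\<lambda>z. f z - g z) n = taylor_coeff f n - taylor_coeff g n"
  using taylor_coeff_of_fps_expansion[OF has_fps_expansion_diff[OF
      holomorphic_on_ball_has_fps_expansion[OF assms(1,3)]
      holomorphic_on_ball_has_fps_expansion[OF assms(2,3)]]]
  by (simp add: taylor_coeff_eq_fps_nth)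

lemma taylor_coeff_cmult:
  assumes "f holomorphic_on ball 0 r" "0 < r"
  shows "taylor_coeff (\<lambda>z. c * f z) n = c * taylor_coeff f n"
  using taylor_coeff_of_fps_expansion[OF has_fps_expansion_cmult_left[OF
      holomorphic_on_ball_has_fps_expansion[OF assms]]]
  by (simp add: taylor_coeff_eq_fps_nth)

lemma taylor_coeff_mult_z:
  assumes "f holomorphic_on ball 0 r" "0 < r"
  shows "taylor_coeff (\<lambda>z. z * f z) n = (if n = 0 then 0 else taylor_coeff f (n - 1))"
  using taylor_coeff_of_fps_expansion[OF has_fps_expansion_mult[OF has_fps_expansion_fps_X
      holomorphic_on_ball_has_fps_expansion[OF assms]]]
  by (simp add: taylor_coeff_eq_fps_nth)

lemma taylor_coeff_sums:
  assumes "f holomorphic_on ball 0 r" "norm z < r"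
  shows "(\<lambda>n. taylor_coeff f n * z ^ n) sums f z"
  using holomorphic_power_series[OF assms(1), of z] assms(2) by (simp add: taylor_coeff_def)

lemma taylor_coeff_unique:
  assumes "\<And>z. norm z < r \<Longrightarrow> (\<lambda>n. c n * z ^ n) sums f z" "0 < r"
  shows "taylor_coeff f n = c n"
proof -
  have "fps_conv_radius (Abs_fps c) \<ge> r"
    unfolding fps_conv_radius_def
  proof (rule conv_radius_geI_ex)
    fix r' assume "0 < r'" "ereal r' < ereal r"
    then show "\<exists>z. norm z = r' \<and> summable (\<lambda>n. fps_nth (Abs_fps c) n * z ^ n)"
      using assms(1)[of "complex_of_real r'"]
      by (intro exI[of _ "complex_of_real r'"]) (auto dest: sums_summable)
  qed
  then have "0 < fps_conv_radius (Abs_fps c)"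
    using assms(2) by (meson ereal_less(2) order.strict_trans2)
  moreover have "\<forall>\<^sub>F z in nhds 0. eval_fps (Abs_fps c) z = f z"
    using eventually_nhds_in_open[of "ball 0 r" 0] assms
    by (auto elim!: eventually_mono simp: eval_fps_def sums_iff)
  ultimately have "f has_fps_expansion Abs_fps c"
    by (auto simp: has_fps_expansion_def)
  then show ?thesis
    using taylor_coeff_of_fps_expansion by fastforce
qed

lemma summable_norm_taylor_coeff:
  assumes "f holomorphic_on ball 0 R" "0 \<le> r" "r < R"
  shows "summable (\<lambda>n. norm (taylor_coeff f n) * r ^ n)"
proof -
  have "conv_radius (taylor_coeff f) \<ge> ereal R"
  proof (rule conv_radius_geI_ex)
    fix r' assume "0 < r'" "ereal r' < ereal R"
    then show "\<exists>z. norm z = r' \<and> summable (\<lambda>n. taylor_coeff f n * z ^ n)"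
      using taylor_coeff_sums[OF assms(1), of "complex_of_real r'"]
      by (intro exI[of _ "complex_of_real r'"]) (auto dest: sums_summable)
  qed
  then have "ereal (norm (complex_of_real r)) < conv_radius (taylor_coeff f)"
    using assms(2,3) by (simp add: order.strict_trans2[of _ "ereal R"])
  from abs_summable_in_conv_radius[OF this] show ?thesis
    using assms(2) by (simp add: norm_mult norm_power)
qed

section \<open>Integrals over circles\<close>

lemma norm_circlepath_0 [simp]: "norm (circlepath 0 r s) = \<bar>r\<bar>"
  by (simp add: circlepath norm_mult)

lemma cnj_circlepath_0_1: "cnj (circlepath 0 1 s) = inverse (circlepath 0 1 s)"
  by (simp add: circlepath exp_minus[symmetric] exp_cnj)

lemma circlepath_0_1_nonzero [simp]: "circlepath 0 1 s \<noteq> 0"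
  by (simp add: circlepath)

lemma continuous_on_circlepath [continuous_intros]: "continuous_on A (circlepath z r)"
  unfolding circlepath by (intro continuous_intros)

lemma continuous_on_comp_circlepath:
  assumes "f holomorphic_on ball 0 R" "0 \<le> r" "r < R"
  shows "continuous_on A (\<lambda>s. f (circlepath 0 r s))"
proof -
  have "circlepath 0 r s \<in> ball 0 R" for s
    using assms by simp
  then show ?thesis
    using continuous_on_compose2[OF holomorphic_on_imp_continuous_on[OF assms(1)]
        continuous_on_circlepath] by blast
qed

lemma cnj_power_eq:
  fixes z :: complex
  assumes "z \<noteq> 0"
  shows "cnj z ^ m = of_real (norm z) ^ (2 * m) / z ^ m"
proof -
  have "cnj z = of_real (norm z) ^ 2 / z"
    using assms by (simp add: field_simps complex_norm_square[symmetric])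
  then show ?thesis
    by (simp add: power_divide power_mult)
qed

lemma taylor_coeff_circle_integral:
  assumes f: "f holomorphic_on ball 0 R" and r: "0 < r" "r < R"
  shows "((\<lambda>s. f (circlepath 0 r s) * cnj (circlepath 0 r s) ^ m) has_integral
           taylor_coeff f m * r ^ (2 * m)) {0..1}"
proof -
  have "cball 0 r \<subseteq> ball 0 R"
    using r by auto
  then have "continuous_on (cball 0 r) f" "f holomorphic_on ball 0 r"
    using f ball_subset_cball by (blast intro: holomorphic_on_imp_continuous_on holomorphic_on_subset)+
  then have "((\<lambda>u. f u / (u - 0) ^ Suc m) has_contour_integral
          2 * pi * \<i> / fact m * (deriv ^^ m) f 0) (circlepath 0 r)"
    using r by (intro Cauchy_has_contour_integral_higher_derivative_circlepath) simp_all
  then have I: "((\<lambda>s. f (circlepath 0 r s) / circlepath 0 r s ^ Suc m *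
        vector_derivative (circlepath 0 r) (at s within {0..1})) has_integral
        2 * pi * \<i> * taylor_coeff f m) {0..1}"
    by (simp add: has_contour_integral_def taylor_coeff_def)
  have eq: "f (circlepath 0 r s) / circlepath 0 r s ^ Suc m *
        vector_derivative (circlepath 0 r) (at s within {0..1}) =
        2 * pi * \<i> / r ^ (2 * m) * (f (circlepath 0 r s) * cnj (circlepath 0 r s) ^ m)"
    if "s \<in> {0..1}" for s
  proof -
    define z where "z = circlepath 0 r s"
    have "norm z = r"
      using r by (simp add: z_def)
    then have "z \<noteq> 0"
      using r by auto
    have "vector_derivative (circlepath 0 r) (at s within {0..1}) = 2 * pi * \<i> * z"
      using that vector_derivative_circlepath01[of s 0 r] by (simp add: z_def circlepath)
    then have "f z / z ^ Suc m * vector_derivative (circlepath 0 r) (at s within {0..1}) =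
        2 * pi * \<i> * (f z / z ^ m)"
      using \<open>z \<noteq> 0\<close> by (simp add: divide_simps)
    also have "\<dots> = 2 * pi * \<i> / r ^ (2 * m) * (f z * cnj z ^ m)"
      using r cnj_power_eq[OF \<open>z \<noteq> 0\<close>, of m] by (simp add: \<open>norm z = r\<close>)
    finally show ?thesis
      by (simp only: z_def)
  qed
  have "((\<lambda>s. 2 * pi * \<i> / r ^ (2 * m) * (f (circlepath 0 r s) * cnj (circlepath 0 r s) ^ m))
        has_integral 2 * pi * \<i> * taylor_coeff f m) {0..1}"
    by (rule has_integral_eq[OF eq I])
  from has_integral_mult_right[OF this, of "r ^ (2 * m) / (2 * pi * \<i>)"] show ?thesis
    using r by (simp add: field_simps)
qed

lemma uniform_limit_cnj_taylor_series:
  assumes g: "g holomorphic_on ball 0 R" and r: "0 < r" "r < R"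
  shows "uniform_limit {0..1} (\<lambda>N s. \<Sum>m<N. cnj (taylor_coeff g m) * cnj (circlepath 0 r s) ^ m)
      (\<lambda>s. cnj (g (circlepath 0 r s))) sequentially"
proof -
  define T where "T m s = cnj (taylor_coeff g m) * cnj (circlepath 0 r s) ^ m" for m s
  have "uniform_limit {0..1} (\<lambda>N s. \<Sum>m<N. T m s) (\<lambda>s. \<Sum>m. T m s) sequentially"
  proof (rule Weierstrass_m_test)
    show "summable (\<lambda>m. norm (taylor_coeff g m) * r ^ m)"
      using r by (intro summable_norm_taylor_coeff[OF g]) auto
  qed (use r in \<open>simp add: T_def norm_mult norm_power\<close>)
  moreover have "(\<Sum>m. T m s) = cnj (g (circlepath 0 r s))" for s
  proof -
    have "(\<lambda>m. taylor_coeff g m * circlepath 0 r s ^ m) sums g (circlepath 0 r s)"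
      using r by (intro taylor_coeff_sums[OF g]) simp
    then show ?thesis
      unfolding T_def using sums_cnj by (force simp: sums_iff)
  qed
  ultimately show ?thesis
    by (simp add: T_def)
qed

lemma circle_integral_mult_cnj:
  assumes f: "f holomorphic_on ball 0 R" and g: "g holomorphic_on ball 0 R" and r: "0 < r" "r < R"
  shows "summable (\<lambda>n. taylor_coeff f n * cnj (taylor_coeff g n) * r ^ (2 * n))"
    and "((\<lambda>s. f (circlepath 0 r s) * cnj (g (circlepath 0 r s))) has_integral
           (\<Sum>n. taylor_coeff f n * cnj (taylor_coeff g n) * r ^ (2 * n))) {0..1}"
proof -
  define \<gamma> where "\<gamma> = circlepath 0 r"
  define P where "P = (\<lambda>N s. f (\<gamma> s) * (\<Sum>m<N. cnj (taylor_coeff g m) * cnj (\<gamma> s) ^ m))"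
  define c where "c n = taylor_coeff f n * cnj (taylor_coeff g n) * r ^ (2 * n)" for n
  have "uniform_limit {0..1} P (\<lambda>s. f (\<gamma> s) * cnj (g (\<gamma> s))) sequentially"
    unfolding P_def
  proof (intro uniform_lim_mult[OF uniform_limit_const]; simp?)
    show "uniform_limit {0..1} (\<lambda>N s. \<Sum>m<N. cnj (taylor_coeff g m) * cnj (\<gamma> s) ^ m)
        (\<lambda>s. cnj (g (\<gamma> s))) sequentially"
      unfolding \<gamma>_def by (rule uniform_limit_cnj_taylor_series[OF g r])
    show "bounded ((\<lambda>s. f (\<gamma> s)) ` {0..1})" "bounded ((\<lambda>s. cnj (g (\<gamma> s))) ` {0..1})"
      using r unfolding \<gamma>_def
      by (auto intro!: compact_imp_bounded compact_continuous_image continuous_intros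
          continuous_on_comp_circlepath[OF f] continuous_on_comp_circlepath[OF g])
  qed
  moreover have "continuous_on {0..1} (P N)" for N
    using r unfolding P_def \<gamma>_def
    by (intro continuous_intros continuous_on_comp_circlepath[OF f]) auto
  ultimately obtain I J where I: "\<And>N. (P N has_integral I N) {0..1}" and
    J: "((\<lambda>s. f (\<gamma> s) * cnj (g (\<gamma> s))) has_integral J) {0..1}" and "I \<longlonglongrightarrow> J"
    using uniform_limit_integral[OF _ _ sequentially_bot] by blast
  moreover have "I = (\<lambda>N. \<Sum>m<N. c m)"
  proof
    fix N
    have "((\<lambda>s. \<Sum>m<N. cnj (taylor_coeff g m) * (f (\<gamma> s) * cnj (\<gamma> s) ^ m))
          has_integral (\<Sum>m<N. cnj (taylor_coeff g m) * (taylor_coeff f m * r ^ (2 * m)))) {0..1}"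
      unfolding \<gamma>_def
      by (intro has_integral_sum has_integral_mult_right taylor_coeff_circle_integral[OF f r]) simp
    then show "I N = (\<Sum>m<N. c m)"
      using has_integral_unique[OF I[of N]]
      by (simp add: c_def P_def sum_distrib_left mult_ac)
  qed
  ultimately have "c sums J"
    by (simp add: sums_def)
  then show "summable c" "((\<lambda>s. f (circlepath 0 r s) * cnj (g (circlepath 0 r s))) has_integral suminf c) {0..1}"
    using J by (auto simp: sums_iff \<gamma>_def)
qed

lemma circle_integral_norm_square:
  assumes f: "f holomorphic_on ball 0 R" and r: "0 < r" "r < R"
  shows "summable (\<lambda>n. (norm (taylor_coeff f n))\<^sup>2 * r ^ (2 * n))"
    and "((\<lambda>s. (norm (f (circlepath 0 r s)))\<^sup>2) has_integral
           (\<Sum>n. (norm (taylor_coeff f n))\<^sup>2 * r ^ (2 * n))) {0..1}"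
proof -
  have eq: "taylor_coeff f n * cnj (taylor_coeff f n) * r ^ (2 * n) =
      of_real ((norm (taylor_coeff f n))\<^sup>2 * r ^ (2 * n))" for n
    unfolding of_real_mult complex_norm_square by simp
  show S: "summable (\<lambda>n. (norm (taylor_coeff f n))\<^sup>2 * r ^ (2 * n))"
    using circle_integral_mult_cnj(1)[OF f f r] unfolding eq summable_complex_of_real .
  have "((\<lambda>s. f (circlepath 0 r s) * cnj (f (circlepath 0 r s))) has_integral
      of_real (\<Sum>n. (norm (taylor_coeff f n))\<^sup>2 * r ^ (2 * n))) {0..1}"
    using circle_integral_mult_cnj(2)[OF f f r] unfolding eq suminf_of_real[OF S] .
  from has_integral_linear[OF this bounded_linear_Re] show "((\<lambda>s. (norm (f (circlepath 0 r s)))\<^sup>2)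
      has_integral (\<Sum>n. (norm (taylor_coeff f n))\<^sup>2 * r ^ (2 * n))) {0..1}"
    by (simp add: o_def complex_norm_square[symmetric])
qed

lemma unit_circle_integral_mean_value:
  assumes "f holomorphic_on ball 0 R" "1 < R"
  shows "((\<lambda>s. f (circlepath 0 1 s)) has_integral f 0) {0..1}"
  using taylor_coeff_circle_integral[OF assms(1), of 1 0] assms(2) by (simp add: taylor_coeff_0)

lemma unit_circle_integral_cauchy:
  assumes f: "f holomorphic_on ball 0 R" and R: "1 < R" and w: "norm w < 1"
  shows "((\<lambda>s. f (circlepath 0 1 s) * circlepath 0 1 s / (circlepath 0 1 s - w)) has_integral f w) {0..1}"
proof -
  have "cball 0 1 \<subseteq> ball 0 R"
    using R by auto
  then have "continuous_on (cball 0 1) f" "f holomorphic_on ball 0 1"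
    using f ball_subset_cball by (blast intro: holomorphic_on_imp_continuous_on holomorphic_on_subset)+
  then have "((\<lambda>u. f u / (u - w) ^ Suc 0) has_contour_integral
      2 * pi * \<i> / fact 0 * (deriv ^^ 0) f w) (circlepath 0 1)"
    using w by (intro Cauchy_has_contour_integral_higher_derivative_circlepath) simp_all
  then have I: "((\<lambda>s. f (circlepath 0 1 s) / (circlepath 0 1 s - w) *
      vector_derivative (circlepath 0 1) (at s within {0..1})) has_integral 2 * pi * \<i> * f w) {0..1}"
    by (simp add: has_contour_integral_def)
  have "f (circlepath 0 1 s) / (circlepath 0 1 s - w) *
      vector_derivative (circlepath 0 1) (at s within {0..1}) =
      2 * pi * \<i> * (f (circlepath 0 1 s) * circlepath 0 1 s / (circlepath 0 1 s - w))"
    if "s \<in> {0..1}" for s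
    using that vector_derivative_circlepath01[of s 0 1] by (simp add: circlepath)
  then have "((\<lambda>s. 2 * pi * \<i> * (f (circlepath 0 1 s) * circlepath 0 1 s / (circlepath 0 1 s - w)))
      has_integral 2 * pi * \<i> * f w) {0..1}"
    by (rule has_integral_eq[OF _ I])
  from has_integral_mult_right[OF this, of "1 / (2 * pi * \<i>)"] show ?thesis
    by simp
qed

lemma h2_inner_eq_unit_circle_integral:
  assumes "f holomorphic_on ball 0 R" "g holomorphic_on ball 0 R" "1 < R"
  shows "((\<lambda>s. f (circlepath 0 1 s) * cnj (g (circlepath 0 1 s))) has_integral h2_inner f g) {0..1}"
  using circle_integral_mult_cnj(2)[OF assms(1,2), of 1] assms(3) by (simp add: h2_inner_def)

section \<open>The Hardy space\<close>

lemma summable_norm_mult_cnj: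
  fixes x y :: "nat \<Rightarrow> complex"
  assumes x: "summable (\<lambda>n. (norm (x n))\<^sup>2)" and y: "summable (\<lambda>n. (norm (y n))\<^sup>2)"
  shows "summable (\<lambda>n. norm (x n * cnj (y n)))"
    and "(\<Sum>n. norm (x n * cnj (y n))) \<le> sqrt (\<Sum>n. (norm (x n))\<^sup>2) * sqrt (\<Sum>n. (norm (y n))\<^sup>2)"
proof -
  have partial: "(\<Sum>n<N. norm (x n * cnj (y n))) \<le>
      sqrt (\<Sum>n. (norm (x n))\<^sup>2) * sqrt (\<Sum>n. (norm (y n))\<^sup>2)" for N
  proof -
    have "(\<Sum>n<N. norm (x n) * norm (y n))\<^sup>2 \<le> (\<Sum>n<N. (norm (x n))\<^sup>2) * (\<Sum>n<N. (norm (y n))\<^sup>2)"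
      by (rule Cauchy_Schwarz_ineq_sum)
    also have "\<dots> \<le> (\<Sum>n. (norm (x n))\<^sup>2) * (\<Sum>n. (norm (y n))\<^sup>2)"
      using x y by (intro mult_mono sum_le_suminf sum_nonneg suminf_nonneg) auto
    finally show ?thesis
      by (simp add: norm_mult real_le_rsqrt flip: real_sqrt_mult)
  qed
  show "summable (\<lambda>n. norm (x n * cnj (y n)))"
    by (rule summableI_nonneg_bounded[OF _ partial]) simp
  then show "(\<Sum>n. norm (x n * cnj (y n))) \<le> sqrt (\<Sum>n. (norm (x n))\<^sup>2) * sqrt (\<Sum>n. (norm (y n))\<^sup>2)"
    using partial by (rule suminf_le_const)
qed

lemma square_add_le: "(u + v)\<^sup>2 \<le> 2 * u\<^sup>2 + 2 * v\<^sup>2" for u v :: real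
  using sum_squares_bound[of u v] by (simp add: power2_sum)

lemma square_norm_diff_le: "(norm (x - y))\<^sup>2 \<le> 2 * (norm x)\<^sup>2 + 2 * (norm y)\<^sup>2"
  by (rule order.trans[OF power_mono[OF norm_triangle_ineq4 norm_ge_zero] square_add_le])

definition h2_norm2 :: "(complex \<Rightarrow> complex) \<Rightarrow> real" where
  "h2_norm2 f = (\<Sum>n. (norm (taylor_coeff f n))\<^sup>2)"

lemma H2_imp_holomorphic: "f \<in> H2 \<Longrightarrow> f holomorphic_on ball 0 1"
  by (simp add: H2_def)

lemma H2_imp_summable: "f \<in> H2 \<Longrightarrow> summable (\<lambda>n. (norm (taylor_coeff f n))\<^sup>2)"
  by (simp add: H2_def)

lemma h2_norm2_nonneg: "f \<in> H2 \<Longrightarrow> 0 \<le> h2_norm2 f"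
  unfolding h2_norm2_def by (auto intro: suminf_nonneg H2_imp_summable)

lemma h2_inner_self:
  assumes "f \<in> H2"
  shows "h2_inner f f = of_real (h2_norm2 f)"
proof -
  have "h2_inner f f = (\<Sum>n. complex_of_real ((norm (taylor_coeff f n))\<^sup>2))"
    unfolding h2_inner_def by (simp only: complex_norm_square)
  also have "\<dots> = of_real (h2_norm2 f)"
    unfolding h2_norm2_def by (rule suminf_of_real[OF H2_imp_summable[OF assms], symmetric])
  finally show ?thesis .
qed

lemma h2_inner_summable:
  "f \<in> H2 \<Longrightarrow> g \<in> H2 \<Longrightarrow> summable (\<lambda>n. taylor_coeff f n * cnj (taylor_coeff g n))"
  by (rule summable_norm_cancel, rule summable_norm_mult_cnj(1)) (auto simp: H2_imp_summable)

lemma h2_inner_norm_le: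
  assumes "f \<in> H2" "g \<in> H2"
  shows "norm (h2_inner f g) \<le> sqrt (h2_norm2 f) * sqrt (h2_norm2 g)"
proof -
  have "norm (h2_inner f g) \<le> (\<Sum>n. norm (taylor_coeff f n * cnj (taylor_coeff g n)))"
    unfolding h2_inner_def
    by (rule summable_norm, rule summable_norm_mult_cnj(1)) (use assms in \<open>auto simp: H2_imp_summable\<close>)
  also have "\<dots> \<le> sqrt (h2_norm2 f) * sqrt (h2_norm2 g)"
    unfolding h2_norm2_def
    by (rule summable_norm_mult_cnj(2)) (use assms in \<open>auto simp: H2_imp_summable\<close>)
  finally show ?thesis .
qed

lemma h2_inner_cong:
  assumes "\<And>z. norm z < 1 \<Longrightarrow> f z = f' z" "\<And>z. norm z < 1 \<Longrightarrow> g z = g' z"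
  shows "h2_inner f g = h2_inner f' g'"
proof -
  have "taylor_coeff f n = taylor_coeff f' n" "taylor_coeff g n = taylor_coeff g' n" for n
    using assms by (auto intro!: taylor_coeff_cong[of 1])
  then show ?thesis
    by (simp add: h2_inner_def)
qed

lemma H2_const: "(\<lambda>z. c) \<in> H2"
proof -
  have "summable (\<lambda>n. (norm (taylor_coeff (\<lambda>z. c) n))\<^sup>2)"
    by (rule summable_finite[of "{0}"]) (auto simp: taylor_coeff_const)
  then show ?thesis
    by (simp add: H2_def)
qed

lemma H2_diff:
  assumes f: "f \<in> H2" and g: "g \<in> H2"
  shows "(\<lambda>z. f z - g z) \<in> H2"
proof -
  have "summable (\<lambda>n. 2 * (norm (taylor_coeff f n))\<^sup>2 + 2 * (norm (taylor_coeff g n))\<^sup>2)"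
    using f g by (intro summable_add summable_mult H2_imp_summable)
  then have "summable (\<lambda>n. (norm (taylor_coeff f n - taylor_coeff g n))\<^sup>2)"
    by (rule summable_comparison_test') (simp add: square_norm_diff_le)
  moreover have "taylor_coeff (\<lambda>z. f z - g z) n = taylor_coeff f n - taylor_coeff g n" for n
    using f g by (intro taylor_coeff_diff[of _ 1]) (auto simp: H2_def)
  ultimately show ?thesis
    using f g by (simp add: H2_def holomorphic_intros)
qed

lemma H2_cmult:
  assumes "f \<in> H2"
  shows "(\<lambda>z. c * f z) \<in> H2"
proof -
  have "taylor_coeff (\<lambda>z. c * f z) n = c * taylor_coeff f n" for n
    using assms by (intro taylor_coeff_cmult[of _ 1]) (auto simp: H2_def)
  then show ?thesis
    using summable_mult[OF H2_imp_summable[OF assms], of "(norm c)\<^sup>2"] assms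
    by (simp add: H2_def norm_mult power_mult_distrib holomorphic_intros)
qed

lemma h2_inner_diff_left:
  assumes "f \<in> H2" "g \<in> H2" "h \<in> H2"
  shows "h2_inner (\<lambda>z. f z - g z) h = h2_inner f h - h2_inner g h"
proof -
  have "taylor_coeff (\<lambda>z. f z - g z) n = taylor_coeff f n - taylor_coeff g n" for n
    using assms by (intro taylor_coeff_diff[of _ 1]) (auto simp: H2_def)
  then show ?thesis
    unfolding h2_inner_def using assms
    by (simp add: left_diff_distrib suminf_diff h2_inner_summable)
qed

lemma h2_inner_cmult_left:
  assumes "f \<in> H2" "g \<in> H2"
  shows "h2_inner (\<lambda>z. c * f z) g = c * h2_inner f g"
proof -
  have "taylor_coeff (\<lambda>z. c * f z) n = c * taylor_coeff f n" for n
    using assms by (intro taylor_coeff_cmult[of _ 1]) (auto simp: H2_def)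
  then show ?thesis
    unfolding h2_inner_def using assms
    by (simp add: suminf_mult h2_inner_summable mult.assoc)
qed

lemma h2_inner_add_right:
  assumes "f \<in> H2" "g \<in> H2" "h \<in> H2"
  shows "h2_inner f (\<lambda>z. g z + h z) = h2_inner f g + h2_inner f h"
proof -
  have "taylor_coeff (\<lambda>z. g z + h z) n = taylor_coeff g n + taylor_coeff h n" for n
    using assms by (intro taylor_coeff_add[of _ 1]) (auto simp: H2_def)
  then show ?thesis
    unfolding h2_inner_def using assms
    by (simp add: distrib_left suminf_add h2_inner_summable)
qed

lemma h2_inner_diff_right:
  assumes "f \<in> H2" "g \<in> H2" "h \<in> H2"
  shows "h2_inner f (\<lambda>z. g z - h z) = h2_inner f g - h2_inner f h"
proof -
  have "taylor_coeff (\<lambda>z. g z - h z) n = taylor_coeff g n - taylor_coeff h n" for n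
    using assms by (intro taylor_coeff_diff[of _ 1]) (auto simp: H2_def)
  then show ?thesis
    unfolding h2_inner_def using assms
    by (simp add: right_diff_distrib suminf_diff h2_inner_summable)
qed

lemma h2_inner_cmult_right:
  assumes "f \<in> H2" "g \<in> H2"
  shows "h2_inner f (\<lambda>z. c * g z) = cnj c * h2_inner f g"
proof -
  have "taylor_coeff (\<lambda>z. c * g z) n = c * taylor_coeff g n" for n
    using assms by (intro taylor_coeff_cmult[of _ 1]) (auto simp: H2_def)
  then show ?thesis
    unfolding h2_inner_def using assms
    by (simp add: suminf_mult h2_inner_summable mult_ac)
qed

lemma h2_inner_const_left: "h2_inner (\<lambda>z. c) g = c * cnj (g 0)"
proof -
  have "h2_inner (\<lambda>z. c) g = (\<Sum>n\<in>{0}. taylor_coeff (\<lambda>z. c) n * cnj (taylor_coeff g n))"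
    unfolding h2_inner_def by (rule suminf_finite) (auto simp: taylor_coeff_const)
  then show ?thesis
    by (simp add: taylor_coeff_const taylor_coeff_0)
qed

lemma h2_inner_const_right: "h2_inner f (\<lambda>z. c) = f 0 * cnj c"
proof -
  have "h2_inner f (\<lambda>z. c) = (\<Sum>n\<in>{0}. taylor_coeff f n * cnj (taylor_coeff (\<lambda>z. c) n))"
    unfolding h2_inner_def by (rule suminf_finite) (auto simp: taylor_coeff_const)
  then show ?thesis
    by (simp add: taylor_coeff_const taylor_coeff_0)
qed

lemma h2_inner_diff_const_left:
  assumes "f \<in> H2" "g \<in> H2"
  shows "h2_inner (\<lambda>z. f z - c) g = h2_inner f g - c * cnj (g 0)"
  using h2_inner_diff_left[OF assms(1) H2_const assms(2)] by (simp add: h2_inner_const_left)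

lemma circle_mean_le_h2_norm2:
  assumes f: "f \<in> H2" and r: "0 < r" "r < 1"
  shows "(\<Sum>n. (norm (taylor_coeff f n))\<^sup>2 * r ^ (2 * n)) \<le> h2_norm2 f"
  unfolding h2_norm2_def
proof (rule suminf_le)
  show "(norm (taylor_coeff f n))\<^sup>2 * r ^ (2 * n) \<le> (norm (taylor_coeff f n))\<^sup>2" for n
    using r by (intro mult_left_le power_le_one) auto
qed (use circle_integral_norm_square(1)[OF H2_imp_holomorphic[OF f] r] H2_imp_summable[OF f] in auto)

lemma circle_mean_le_of_norm_diff_le:
  assumes f: "f holomorphic_on ball 0 1" and g: "g holomorphic_on ball 0 1" and r: "0 < r" "r < 1"
    and bound: "\<And>s. norm (f (circlepath 0 r s) - g (circlepath 0 r s)) \<le> E"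
  shows "(\<Sum>n. (norm (taylor_coeff f n))\<^sup>2 * r ^ (2 * n)) \<le>
      2 * (\<Sum>n. (norm (taylor_coeff g n))\<^sup>2 * r ^ (2 * n)) + 2 * E\<^sup>2"
proof (rule has_integral_le[OF circle_integral_norm_square(2)[OF f r]])
  show "((\<lambda>s. 2 * (norm (g (circlepath 0 r s)))\<^sup>2 + 2 * E\<^sup>2) has_integral
      2 * (\<Sum>n. (norm (taylor_coeff g n))\<^sup>2 * r ^ (2 * n)) + 2 * E\<^sup>2) {0..1}"
    using has_integral_add[OF has_integral_mult_right[OF circle_integral_norm_square(2)[OF g r]]
        has_integral_const_real[of "2 * E\<^sup>2" 0 1]]
    by simp
  fix s :: real
  have "norm (f (circlepath 0 r s)) \<le> norm (g (circlepath 0 r s)) + E"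
    using bound[of s] norm_triangle_ineq2[of "f (circlepath 0 r s)" "g (circlepath 0 r s)"] by linarith
  then have "(norm (f (circlepath 0 r s)))\<^sup>2 \<le> (norm (g (circlepath 0 r s)) + E)\<^sup>2"
    by (rule power_mono) simp
  also have "\<dots> \<le> 2 * (norm (g (circlepath 0 r s)))\<^sup>2 + 2 * E\<^sup>2"
    by (rule square_add_le)
  finally show "(norm (f (circlepath 0 r s)))\<^sup>2 \<le> 2 * (norm (g (circlepath 0 r s)))\<^sup>2 + 2 * E\<^sup>2" .
qed

lemma H2_of_circle_mean_bounded:
  assumes f: "f holomorphic_on ball 0 1" and r0: "r0 < 1"
    and bound: "\<And>r. r0 < r \<Longrightarrow> r < 1 \<Longrightarrow> (\<Sum>n. (norm (taylor_coeff f n))\<^sup>2 * r ^ (2 * n)) \<le> B"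
  shows "f \<in> H2" and "h2_norm2 f \<le> B"
proof -
  have partial: "(\<Sum>n<N. (norm (taylor_coeff f n))\<^sup>2) \<le> B" for N
  proof (rule tendsto_upperbound)
    show "((\<lambda>r. \<Sum>n<N. (norm (taylor_coeff f n))\<^sup>2 * r ^ (2 * n)) \<longlongrightarrow>
        (\<Sum>n<N. (norm (taylor_coeff f n))\<^sup>2)) (at_left 1)"
      by (rule tendsto_eq_intros refl | simp)+
    have "eventually (\<lambda>r. max r0 0 < r \<and> r < 1) (at_left (1::real))"
      using eventually_at_left_real[of "max r0 0" 1] r0 by (auto elim!: eventually_mono)
    then show "\<forall>\<^sub>F r in at_left 1. (\<Sum>n<N. (norm (taylor_coeff f n))\<^sup>2 * r ^ (2 * n)) \<le> B"
    proof (rule eventually_mono)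
      fix r :: real
      assume r: "max r0 0 < r \<and> r < 1"
      have "(\<Sum>n<N. (norm (taylor_coeff f n))\<^sup>2 * r ^ (2 * n)) \<le>
          (\<Sum>n. (norm (taylor_coeff f n))\<^sup>2 * r ^ (2 * n))"
        using r by (intro sum_le_suminf circle_integral_norm_square(1)[OF f]) auto
      also have "\<dots> \<le> B"
        using r by (intro bound) auto
      finally show "(\<Sum>n<N. (norm (taylor_coeff f n))\<^sup>2 * r ^ (2 * n)) \<le> B" .
    qed
  qed simp
  have "summable (\<lambda>n. (norm (taylor_coeff f n))\<^sup>2)"
    by (rule summableI_nonneg_bounded[OF _ partial]) simp
  then show "f \<in> H2"
    using f by (simp add: H2_def)
  show "h2_norm2 f \<le> B"
    unfolding h2_norm2_def by (rule suminf_le_const[OF \<open>summable _\<close> partial])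
qed

lemma H2_dominated:
  assumes g: "g holomorphic_on ball 0 1" and f: "f \<in> H2" and r0: "r0 < 1" and A: "0 \<le> A"
    and bound: "\<And>z. r0 < norm z \<Longrightarrow> norm z < 1 \<Longrightarrow> (norm (g z))\<^sup>2 \<le> A * (norm (f z))\<^sup>2 + B"
  shows "g \<in> H2" and "h2_norm2 g \<le> A * h2_norm2 f + B"
proof -
  have "(\<Sum>n. (norm (taylor_coeff g n))\<^sup>2 * r ^ (2 * n)) \<le> A * h2_norm2 f + B"
    if r: "max r0 0 < r" "r < 1" for r
  proof -
    have r': "0 < r" "r < 1"
      using r by auto
    have "((\<lambda>s. A * (norm (f (circlepath 0 r s)))\<^sup>2 + B) has_integral
        A * (\<Sum>n. (norm (taylor_coeff f n))\<^sup>2 * r ^ (2 * n)) + B) {0..1}"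
      using has_integral_add[OF has_integral_mult_right[OF
          circle_integral_norm_square(2)[OF H2_imp_holomorphic[OF f] r']]
          has_integral_const_real[of B 0 1]]
      by simp
    then have "(\<Sum>n. (norm (taylor_coeff g n))\<^sup>2 * r ^ (2 * n)) \<le>
        A * (\<Sum>n. (norm (taylor_coeff f n))\<^sup>2 * r ^ (2 * n)) + B"
      by (rule has_integral_le[OF circle_integral_norm_square(2)[OF g r']])
         (use r in \<open>auto intro!: bound\<close>)
    also have "\<dots> \<le> A * h2_norm2 f + B"
      using A circle_mean_le_h2_norm2[OF f r'] by (simp add: mult_left_mono)
    finally show ?thesis .
  qed
  then show "g \<in> H2" "h2_norm2 g \<le> A * h2_norm2 f + B"
    using H2_of_circle_mean_bounded[OF g, of "max r0 0"] r0 by auto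
qed

lemma H2_bounded:
  assumes "f holomorphic_on ball 0 1" "\<And>z. norm z < 1 \<Longrightarrow> norm (f z) \<le> M"
  shows "f \<in> H2"
proof (rule H2_dominated(1)[OF assms(1) H2_const, of 0 0 0 "M\<^sup>2"])
  show "(norm (f z))\<^sup>2 \<le> 0 * (norm 0)\<^sup>2 + M\<^sup>2" if "0 < norm z" "norm z < 1" for z
    using assms(2)[of z] that by (simp add: power_mono)
qed simp_all

lemma H2_mult_bounded:
  assumes "m holomorphic_on ball 0 1" "\<And>z. norm z < 1 \<Longrightarrow> norm (m z) \<le> M" "f \<in> H2"
  shows "(\<lambda>z. m z * f z) \<in> H2" and "h2_norm2 (\<lambda>z. m z * f z) \<le> M\<^sup>2 * h2_norm2 f"
proof -
  have hol: "(\<lambda>z. m z * f z) holomorphic_on ball 0 1"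
    using assms(1,3) by (auto intro!: holomorphic_intros simp: H2_def)
  have "(norm (m z * f z))\<^sup>2 \<le> M\<^sup>2 * (norm (f z))\<^sup>2 + 0" if "norm z < 1" for z
    using assms(2)[OF that]
    by (simp add: norm_mult power_mult_distrib[symmetric] power_mono mult_right_mono)
  then show "(\<lambda>z. m z * f z) \<in> H2" and "h2_norm2 (\<lambda>z. m z * f z) \<le> M\<^sup>2 * h2_norm2 f"
    using H2_dominated[OF hol assms(3), of 0 "M\<^sup>2" 0] by auto
qed

lemma H2_mult_z: "f \<in> H2 \<Longrightarrow> (\<lambda>z. z * f z) \<in> H2"
  using H2_mult_bounded(1)[of "\<lambda>z. z" 1 f] by (auto intro: holomorphic_intros)

lemma h2_inner_mult_z:
  assumes f: "f \<in> H2" and g: "g \<in> H2"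
  shows "h2_inner (\<lambda>z. z * f z) (\<lambda>z. z * g z) = h2_inner f g"
proof -
  define a where "a n = taylor_coeff (\<lambda>z. z * f z) n * cnj (taylor_coeff (\<lambda>z. z * g z) n)" for n
  have a: "a 0 = 0" "a (Suc n) = taylor_coeff f n * cnj (taylor_coeff g n)" for n
    using f g by (simp_all add: a_def taylor_coeff_mult_z[of _ 1] H2_imp_holomorphic)
  have "summable a"
    using h2_inner_summable[OF f g] summable_Suc_iff[of a] by (simp add: a)
  then show ?thesis
    unfolding h2_inner_def a_def[symmetric] using suminf_split_head[of a] by (simp add: a)
qed

definition taylor_poly :: "(complex \<Rightarrow> complex) \<Rightarrow> nat \<Rightarrow> complex \<Rightarrow> complex" where
  "taylor_poly f N z = (\<Sum>n<N. taylor_coeff f n * z ^ n)"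

lemma taylor_coeff_taylor_poly:
  "taylor_coeff (taylor_poly f N) n = (if n < N then taylor_coeff f n else 0)"
proof (rule taylor_coeff_unique[of 1])
  fix z :: complex
  have "(\<lambda>n. (if n < N then taylor_coeff f n else 0) * z ^ n) sums
      (\<Sum>n\<in>{..<N}. (if n < N then taylor_coeff f n else 0) * z ^ n)"
    by (rule sums_finite) auto
  then show "(\<lambda>n. (if n < N then taylor_coeff f n else 0) * z ^ n) sums taylor_poly f N z"
    by (simp add: taylor_poly_def)
qed simp

lemma H2_taylor_poly: "taylor_poly f N \<in> H2"
proof -
  have "summable (\<lambda>n. (norm (taylor_coeff (taylor_poly f N) n))\<^sup>2)"
    by (rule summable_finite[of "{..<N}"]) (auto simp: taylor_coeff_taylor_poly)
  then show ?thesis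
    by (simp add: H2_def taylor_poly_def[abs_def] holomorphic_intros)
qed

lemma h2_norm2_taylor_poly_le:
  assumes "f \<in> H2"
  shows "h2_norm2 (taylor_poly f N) \<le> h2_norm2 f"
  unfolding h2_norm2_def
  by (rule suminf_le) (use H2_imp_summable[OF H2_taylor_poly] H2_imp_summable[OF assms] in
      \<open>auto simp: taylor_coeff_taylor_poly\<close>)

lemma h2_norm2_diff_taylor_poly_tendsto:
  assumes f: "f \<in> H2"
  shows "(\<lambda>N. h2_norm2 (\<lambda>z. f z - taylor_poly f N z)) \<longlonglongrightarrow> 0"
proof -
  define c where "c n = (norm (taylor_coeff f n))\<^sup>2" for n
  have "summable c"
    unfolding c_def by (rule H2_imp_summable[OF f])
  have coeff: "taylor_coeff (\<lambda>z. f z - taylor_poly f N z) n = (if n < N then 0 else taylor_coeff f n)"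
    for N n
    using f by (subst taylor_coeff_diff[of _ 1])
      (auto simp: taylor_coeff_taylor_poly H2_def H2_imp_holomorphic[OF H2_taylor_poly])
  have tail: "(\<Sum>n. if n < N then 0 else c n) = (\<Sum>k. c (k + N))" for N
  proof -
    have "summable (\<lambda>n. if n < N then 0 else c n)"
      by (rule summable_comparison_test'[OF \<open>summable c\<close>]) (simp add: c_def)
    from suminf_split_initial_segment[OF this, of N] show ?thesis
      by simp
  qed
  have "h2_norm2 (\<lambda>z. f z - taylor_poly f N z) = (\<Sum>k. c (k + N))" for N
  proof -
    have "(\<lambda>n. (norm (taylor_coeff (\<lambda>z. f z - taylor_poly f N z) n))\<^sup>2) =
        (\<lambda>n. if n < N then 0 else c n)"
      by (simp add: coeff c_def fun_eq_iff)
    then show ?thesis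
      unfolding h2_norm2_def using tail by simp
  qed
  then show ?thesis
    using suminf_exist_split2[OF \<open>summable c\<close>] by simp
qed

lemma norm_diff_taylor_poly_le:
  assumes f: "f holomorphic_on ball 0 1" and \<rho>: "0 \<le> \<rho>" "\<rho> < 1" and w: "norm w \<le> \<rho>"
  shows "norm (f w - taylor_poly f N w) \<le> (\<Sum>k. norm (taylor_coeff f (k + N)) * \<rho> ^ (k + N))"
proof -
  have sums: "(\<lambda>n. taylor_coeff f n * w ^ n) sums f w"
    using w \<rho> by (intro taylor_coeff_sums[OF f]) simp
  then have "f w - taylor_poly f N w = (\<Sum>k. taylor_coeff f (k + N) * w ^ (k + N))"
    using suminf_split_initial_segment[OF sums_summable[OF sums], of N] sums_unique[OF sums]
    by (simp add: taylor_poly_def)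
  also have "norm \<dots> \<le> (\<Sum>k. norm (taylor_coeff f (k + N)) * \<rho> ^ (k + N))"
  proof (rule norm_suminf_le)
    show "norm (taylor_coeff f (k + N) * w ^ (k + N)) \<le> norm (taylor_coeff f (k + N)) * \<rho> ^ (k + N)" for k
      using w by (simp add: norm_mult norm_power mult_left_mono power_mono)
    show "summable (\<lambda>k. norm (taylor_coeff f (k + N)) * \<rho> ^ (k + N))"
      using summable_norm_taylor_coeff[OF f \<rho>] by (rule summable_ignore_initial_segment)
  qed
  finally show ?thesis .
qed

lemma h2_inner_tendsto:
  assumes f: "f \<in> H2" and g: "g \<in> H2" and F: "\<And>N. F N \<in> H2" and G: "\<And>N. G N \<in> H2"
    and f_lim: "(\<lambda>N. h2_norm2 (\<lambda>z. f z - F N z)) \<longlonglongrightarrow> 0"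
    and g_lim: "(\<lambda>N. h2_norm2 (\<lambda>z. g z - G N z)) \<longlonglongrightarrow> 0"
    and B: "\<And>N. h2_norm2 (F N) \<le> B"
  shows "(\<lambda>N. h2_inner (F N) (G N)) \<longlonglongrightarrow> h2_inner f g"
proof -
  have df: "(\<lambda>z. f z - F N z) \<in> H2" and dg: "(\<lambda>z. g z - G N z) \<in> H2" for N
    by (intro H2_diff f g F G)+
  define b where "b N = sqrt (h2_norm2 (\<lambda>z. f z - F N z)) * sqrt (h2_norm2 g) +
      sqrt B * sqrt (h2_norm2 (\<lambda>z. g z - G N z))" for N
  have bound: "norm (h2_inner f g - h2_inner (F N) (G N)) \<le> b N" for N
  proof -
    have "h2_inner f g - h2_inner (F N) (G N) =
        h2_inner (\<lambda>z. f z - F N z) g + h2_inner (F N) (\<lambda>z. g z - G N z)"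
      using h2_inner_diff_left[OF f F g, of N] h2_inner_diff_right[OF F g G, of N] by simp
    then have "norm (h2_inner f g - h2_inner (F N) (G N)) \<le>
        norm (h2_inner (\<lambda>z. f z - F N z) g) + norm (h2_inner (F N) (\<lambda>z. g z - G N z))"
      by (simp add: norm_triangle_ineq)
    also have "\<dots> \<le> sqrt (h2_norm2 (\<lambda>z. f z - F N z)) * sqrt (h2_norm2 g) +
        sqrt (h2_norm2 (F N)) * sqrt (h2_norm2 (\<lambda>z. g z - G N z))"
      by (intro add_mono h2_inner_norm_le df dg F g)
    also have "\<dots> \<le> b N"
      unfolding b_def using B[of N] h2_norm2_nonneg[OF dg]
      by (intro add_left_mono mult_right_mono) auto
    finally show ?thesis .
  qed
  have "b \<longlonglongrightarrow> sqrt 0 * sqrt (h2_norm2 g) + sqrt B * sqrt 0"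
    unfolding b_def by (intro tendsto_intros f_lim g_lim)
  then have "(\<lambda>N. h2_inner f g - h2_inner (F N) (G N)) \<longlonglongrightarrow> 0"
    by (intro Lim_null_comparison[OF always_eventually[OF allI[OF bound]]]) simp
  from tendsto_diff[OF tendsto_const[of "h2_inner f g"] this] show ?thesis
    by simp
qed

lemma h2_inner_tendsto_taylor_poly:
  fixes T :: "(complex \<Rightarrow> complex) \<Rightarrow> complex \<Rightarrow> complex"
  assumes T: "\<And>h. h \<in> H2 \<Longrightarrow> T h \<in> H2"
    and bound: "\<And>h. h \<in> H2 \<Longrightarrow> h2_norm2 (T h) \<le> C * h2_norm2 h" and "0 \<le> C"
    and diff: "\<And>h k. T (\<lambda>z. h z - k z) = (\<lambda>z. T h z - T k z)"
    and f: "f \<in> H2" and g: "g \<in> H2"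
  shows "(\<lambda>N. h2_inner (T (taylor_poly f N)) (T (taylor_poly g N))) \<longlonglongrightarrow> h2_inner (T f) (T g)"
proof (rule h2_inner_tendsto)
  have "(\<lambda>N. h2_norm2 (\<lambda>z. T h z - T (taylor_poly h N) z)) \<longlonglongrightarrow> 0" if h: "h \<in> H2" for h
  proof (rule Lim_null_comparison)
    show "\<forall>\<^sub>F N in sequentially. norm (h2_norm2 (\<lambda>z. T h z - T (taylor_poly h N) z)) \<le>
        C * h2_norm2 (\<lambda>z. h z - taylor_poly h N z)"
      using bound[OF H2_diff[OF h H2_taylor_poly]] h2_norm2_nonneg[OF T[OF H2_diff[OF h H2_taylor_poly]]]
      by (simp add: diff)
    show "(\<lambda>N. C * h2_norm2 (\<lambda>z. h z - taylor_poly h N z)) \<longlonglongrightarrow> 0"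
      using tendsto_mult_right_zero[OF h2_norm2_diff_taylor_poly_tendsto[OF h]] .
  qed
  then show "(\<lambda>N. h2_norm2 (\<lambda>z. T f z - T (taylor_poly f N) z)) \<longlonglongrightarrow> 0"
    and "(\<lambda>N. h2_norm2 (\<lambda>z. T g z - T (taylor_poly g N) z)) \<longlonglongrightarrow> 0"
    using f g by auto
  show "h2_norm2 (T (taylor_poly f N)) \<le> C * h2_norm2 f" for N
    using bound[OF H2_taylor_poly] mult_left_mono[OF h2_norm2_taylor_poly_le[OF f] \<open>0 \<le> C\<close>]
    by (rule order.trans)
qed (use T f g H2_taylor_poly in auto)

section \<open>Szego kernel and difference quotients\<close>

definition szego_kernel :: "complex \<Rightarrow> complex \<Rightarrow> complex" where
  "szego_kernel l z = 1 / (1 - cnj l * z)"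

lemma szego_kernel_holomorphic:
  assumes "\<And>z. z \<in> S \<Longrightarrow> norm (cnj l * z) < 1"
  shows "szego_kernel l holomorphic_on S"
proof -
  have "1 - cnj l * z \<noteq> 0" if "z \<in> S" for z
    using assms[OF that] by auto
  then show ?thesis
    unfolding szego_kernel_def by (intro holomorphic_intros) auto
qed

lemma norm_cnj_mult_less_1: "norm l < 1 \<Longrightarrow> norm z \<le> 1 \<Longrightarrow> norm (cnj l * z) < 1"
  using mult_right_le_one_le[of "norm l" "norm z"] by (simp add: norm_mult)

lemma norm_szego_kernel_le:
  assumes "norm l < 1" "norm z \<le> 1"
  shows "norm (szego_kernel l z) \<le> 1 / (1 - norm l)"
proof -
  have "norm (cnj l * z) \<le> norm l"
    using assms mult_right_le_one_le[of "norm l" "norm z"] by (simp add: norm_mult)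
  then have "1 - norm l \<le> norm (1 - cnj l * z)"
    using norm_triangle_ineq2[of 1 "cnj l * z"] by simp
  then show ?thesis
    using assms(1) unfolding szego_kernel_def by (simp add: norm_divide divide_simps)
qed

lemma H2_mult_szego_kernel:
  assumes "norm l < 1" "f \<in> H2"
  shows "(\<lambda>z. szego_kernel l z * f z) \<in> H2"
    and "h2_norm2 (\<lambda>z. szego_kernel l z * f z) \<le> (1 / (1 - norm l))\<^sup>2 * h2_norm2 f"
  using H2_mult_bounded[OF szego_kernel_holomorphic norm_szego_kernel_le assms(2)]
    norm_cnj_mult_less_1 assms(1) by auto

definition diff_quot :: "(complex \<Rightarrow> complex) \<Rightarrow> complex \<Rightarrow> complex \<Rightarrow> complex" where
  "diff_quot f l z = (if z = l then deriv f l else (f z - f l) / (z - l))"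

lemma diff_quot_holomorphic:
  assumes "f holomorphic_on ball 0 1" "norm l < 1"
  shows "diff_quot f l holomorphic_on ball 0 1"
  unfolding diff_quot_def[abs_def] by (rule pole_lemma[OF assms(1)]) (use assms in auto)

lemma H2_diff_quot:
  assumes f: "f \<in> H2" and l: "norm l < 1"
  shows "diff_quot f l \<in> H2"
proof -
  define d where "d = (1 - norm l) / 2"
  have d: "0 < d"
    using l by (simp add: d_def)
  show ?thesis
  proof (rule H2_dominated(1)[OF diff_quot_holomorphic[OF H2_imp_holomorphic[OF f] l] f,
        of "(1 + norm l) / 2" "2 / d\<^sup>2" "2 * (norm (f l))\<^sup>2 / d\<^sup>2"])
    fix z :: complex
    assume z: "(1 + norm l) / 2 < norm z" "norm z < 1"
    have "d \<le> norm (z - l)"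
      using z norm_triangle_ineq2[of z l] by (simp add: d_def)
    then have "norm (diff_quot f l z) \<le> norm (f z - f l) / d"
      using d by (auto simp: diff_quot_def norm_divide intro: divide_left_mono)
    then have "(norm (diff_quot f l z))\<^sup>2 \<le> (norm (f z - f l) / d)\<^sup>2"
      by (rule power_mono) simp
    also have "\<dots> = (norm (f z - f l))\<^sup>2 / d\<^sup>2"
      by (simp add: power_divide)
    also have "\<dots> \<le> (2 * (norm (f z))\<^sup>2 + 2 * (norm (f l))\<^sup>2) / d\<^sup>2"
      using d by (intro divide_right_mono square_norm_diff_le) auto
    finally show "(norm (diff_quot f l z))\<^sup>2 \<le> 2 / d\<^sup>2 * (norm (f z))\<^sup>2 + 2 * (norm (f l))\<^sup>2 / d\<^sup>2"
      by (simp add: add_divide_distrib)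
  qed (use l in auto)
qed

lemma diff_quot_mult:
  assumes "f field_differentiable at l" "g field_differentiable at l"
  shows "diff_quot (\<lambda>z. f z * g z) l z = f z * diff_quot g l z + g l * diff_quot f l z"
proof (cases "z = l")
  case False
  then have "(f z * g z - f l * g l) / (z - l) =
      f z * ((g z - g l) / (z - l)) + g l * ((f z - f l) / (z - l))"
    by (simp add: divide_simps) (simp add: algebra_simps)
  then show ?thesis
    using False by (simp add: diff_quot_def)
qed (use assms in \<open>simp add: diff_quot_def algebra_simps\<close>)

lemma diff_quot_decompose:
  "f z = (z - l) * diff_quot f l z + f l"
  by (cases "z = l") (simp_all add: diff_quot_def)

text \<open>With \<open>K = szego_kernel l * F\<close> one has \<open>F = K - cnj l * z * K\<close>, so only the fact
  that multiplication by \<open>z\<close> is an isometry of \<open>H2\<close> enters.\<close>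

lemma h2_inner_szego_kernel_mult_linear:
  assumes F: "F \<in> H2" and X: "X \<in> H2" and l: "norm l < 1"
  shows "h2_inner (\<lambda>z. szego_kernel l z * F z) (\<lambda>z. (z - l) * X z) = h2_inner F (\<lambda>z. z * X z)"
proof -
  define K where "K = (\<lambda>z. szego_kernel l z * F z)"
  have K: "K \<in> H2"
    unfolding K_def by (rule H2_mult_szego_kernel(1)[OF l F])
  have "F z = K z - cnj l * (z * K z)" if "norm z < 1" for z
  proof -
    have "1 - cnj l * z \<noteq> 0"
      using norm_cnj_mult_less_1[OF l, of z] that by auto
    then show ?thesis
      by (simp add: K_def szego_kernel_def divide_simps) (simp add: algebra_simps)
  qed
  then have "h2_inner F (\<lambda>z. z * X z) = h2_inner (\<lambda>z. K z - cnj l * (z * K z)) (\<lambda>z. z * X z)"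
    by (intro h2_inner_cong) auto
  also have "\<dots> = h2_inner K (\<lambda>z. z * X z) - cnj l * h2_inner K X"
    using K X by (simp add: h2_inner_diff_left h2_inner_cmult_left h2_inner_mult_z H2_mult_z H2_cmult)
  also have "\<dots> = h2_inner K (\<lambda>z. z * X z - l * X z)"
    using K X by (simp add: h2_inner_diff_right h2_inner_cmult_right H2_mult_z H2_cmult)
  finally show ?thesis
    by (simp add: K_def algebra_simps)
qed

lemma h2_inner_szego_kernel_mult:
  assumes F: "F \<in> H2" and Y: "Y \<in> H2" and l: "norm l < 1"
  shows "h2_inner (\<lambda>z. szego_kernel l z * F z) Y =
      h2_inner F (\<lambda>z. z * diff_quot Y l z) + F 0 * cnj (Y l)"
proof -
  define X where "X = diff_quot Y l"
  have X: "X \<in> H2"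
    unfolding X_def by (rule H2_diff_quot[OF Y l])
  have decompose: "(\<lambda>z. (z - l) * X z + Y l) = Y"
    unfolding X_def by (rule ext, rule diff_quot_decompose[symmetric])
  have "(\<lambda>z. (z - l) * X z) \<in> H2"
  proof (rule H2_mult_bounded(1)[OF _ _ X])
    show "norm (z - l) \<le> 2" if "norm z < 1" for z
      using norm_triangle_ineq4[of z l] that l by linarith
  qed (intro holomorphic_intros)
  from h2_inner_add_right[OF H2_mult_szego_kernel(1)[OF l F] this H2_const[of "Y l"]]
  have "h2_inner (\<lambda>z. szego_kernel l z * F z) Y =
      h2_inner (\<lambda>z. szego_kernel l z * F z) (\<lambda>z. (z - l) * X z) +
      h2_inner (\<lambda>z. szego_kernel l z * F z) (\<lambda>z. Y l)"
    unfolding decompose .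
  then show ?thesis
    unfolding X_def[symmetric]
    by (simp add: h2_inner_szego_kernel_mult_linear[OF F X l] h2_inner_const_right)
       (simp add: szego_kernel_def)
qed

lemma szego_kernel_mult_orthogonal:
  assumes T: "T holomorphic_on ball 0 1" and M: "\<And>z. norm z < 1 \<Longrightarrow> norm (T z) \<le> M"
    and f: "f \<in> model_space T" and l: "norm l < 1" and "T l \<noteq> 0" and w: "w \<in> H2"
  defines "c \<equiv> f 0 + h2_inner f (\<lambda>z. z * diff_quot T l z) / cnj (T l)"
  shows "h2_inner (\<lambda>z. szego_kernel l z * (f z - c)) (\<lambda>z. T z * w z) = 0"
proof -
  have "f \<in> H2" and orth: "\<And>h. h \<in> H2 \<Longrightarrow> h2_inner f (\<lambda>z. T z * h z) = 0"
    using f by (auto simp: model_space_def)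
  have F: "(\<lambda>z. f z - c) \<in> H2"
    by (rule H2_diff[OF \<open>f \<in> H2\<close> H2_const])
  define A where "A = (\<lambda>z. T z * (z * diff_quot w l z))"
  define B where "B = (\<lambda>z. z * diff_quot T l z)"
  have A: "A \<in> H2"
    unfolding A_def by (intro H2_mult_bounded(1)[OF T M] H2_mult_z H2_diff_quot w l)
  have B: "B \<in> H2"
    unfolding B_def by (intro H2_mult_z H2_diff_quot H2_bounded[OF T M] l)
  have "h2_inner (\<lambda>z. szego_kernel l z * (f z - c)) (\<lambda>z. T z * w z) =
      h2_inner (\<lambda>z. f z - c) (\<lambda>z. z * diff_quot (\<lambda>z. T z * w z) l z) + (f 0 - c) * cnj (T l * w l)"
    by (rule h2_inner_szego_kernel_mult[OF F H2_mult_bounded(1)[OF T M w] l])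
  also have "h2_inner (\<lambda>z. f z - c) (\<lambda>z. z * diff_quot (\<lambda>z. T z * w z) l z) =
      h2_inner (\<lambda>z. f z - c) (\<lambda>z. A z + w l * B z)"
  proof (rule h2_inner_cong)
    have "T field_differentiable at l" "w field_differentiable at l"
      using T H2_imp_holomorphic[OF w] l by (auto intro!: holomorphic_on_imp_differentiable_at)
    then show "z * diff_quot (\<lambda>z. T z * w z) l z = A z + w l * B z" for z
      unfolding A_def B_def by (simp add: diff_quot_mult algebra_simps)
  qed simp
  also have "\<dots> = h2_inner f A + cnj (w l) * h2_inner f B"
    using A B F \<open>f \<in> H2\<close>
    by (simp add: h2_inner_add_right h2_inner_cmult_right h2_inner_diff_const_left H2_cmult
        A_def B_def)
  also have "h2_inner f A = 0"
    unfolding A_def by (intro orth H2_mult_z H2_diff_quot w l)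
  finally show ?thesis
    using \<open>T l \<noteq> 0\<close> by (simp add: c_def B_def field_simps)
qed

section \<open>Moebius maps\<close>

lemma moebius_eq_Moebius_function: "moebius a = Moebius_function 0 a"
  by (simp add: fun_eq_iff moebius_def Moebius_function_simple)

lemma moebius_0 [simp]: "moebius a 0 = - a"
  by (simp add: moebius_def)

lemma moebius_holomorphic:
  assumes "\<And>z. z \<in> S \<Longrightarrow> norm (cnj a * z) < 1"
  shows "moebius a holomorphic_on S"
proof -
  have "1 - cnj a * z \<noteq> 0" if "z \<in> S" for z
    using assms[OF that] by auto
  then show ?thesis
    unfolding moebius_def[abs_def] by (intro holomorphic_intros) auto
qed

lemma norm_moebius_less_1: "norm a < 1 \<Longrightarrow> norm z < 1 \<Longrightarrow> norm (moebius a z) < 1"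
  by (simp add: moebius_eq_Moebius_function Moebius_function_norm_lt_1)

lemma moebius_uminus_moebius: "norm a < 1 \<Longrightarrow> norm z < 1 \<Longrightarrow> moebius (- a) (moebius a z) = z"
  by (simp add: moebius_eq_Moebius_function Moebius_function_compose)

lemma norm_moebius_eq_1:
  assumes "norm a < 1" "norm z = 1"
  shows "norm (moebius a z) = 1"
proof -
  have "z * cnj z = 1"
    using assms(2) by (simp flip: complex_norm_square)
  then have "1 - cnj a * z = z * cnj (z - a)"
    by (simp add: algebra_simps)
  moreover have "z - a \<noteq> 0"
    using assms by auto
  ultimately show ?thesis
    using assms(2) by (simp add: moebius_def norm_divide norm_mult del: complex_cnj_diff)
qed

lemma exists_radius_cnj_mult_less_1:
  assumes "norm a < 1"
  obtains R where "1 < R" "\<And>z. norm z < R \<Longrightarrow> norm (cnj a * z) < 1"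
proof -
  define R where "R = 2 / (1 + norm a)"
  have "0 < 1 + norm a"
    by (simp add: add_pos_nonneg)
  then have "1 < R" "norm a * R < 1"
    using assms by (simp_all add: R_def field_simps)
  moreover have "norm (cnj a * z) < 1" if "norm z < R" for z
    using mult_left_mono[of "norm z" R "norm a"] that \<open>norm a * R < 1\<close> by (simp add: norm_mult)
  ultimately show ?thesis
    using that by blast
qed

lemma holomorphic_on_moebius_comp:
  assumes "norm a < 1" "f holomorphic_on ball 0 1"
  shows "(\<lambda>z. f (moebius a z)) holomorphic_on ball 0 1"
proof -
  have "moebius a holomorphic_on ball 0 1"
    using assms(1) by (intro moebius_holomorphic norm_cnj_mult_less_1) auto
  moreover have "moebius a ` ball 0 1 \<subseteq> ball 0 1"
    using norm_moebius_less_1[OF assms(1)] by auto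
  ultimately show ?thesis
    using holomorphic_on_compose_gen[OF _ assms(2)] by (simp add: o_def)
qed

lemma norm_moebius_bounded_on_cball:
  assumes "norm a < 1" "0 \<le> r" "r < 1"
  obtains \<rho> where "\<rho> < 1" "\<And>z. norm z \<le> r \<Longrightarrow> norm (moebius a z) \<le> \<rho>"
proof -
  have "continuous_on (cball 0 r) (\<lambda>z. norm (moebius a z))"
    using assms by (intro continuous_intros holomorphic_on_imp_continuous_on moebius_holomorphic
        norm_cnj_mult_less_1) auto
  then obtain z0 where "z0 \<in> cball 0 r" "\<And>z. z \<in> cball 0 r \<Longrightarrow> norm (moebius a z) \<le> norm (moebius a z0)"
    using continuous_attains_sup[of "cball 0 r"] assms(2) by force
  then show ?thesis
    using that[of "norm (moebius a z0)"] norm_moebius_less_1[OF assms(1), of z0] assms by auto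
qed

section \<open>Composition with a Moebius map\<close>

definition moebius_moment :: "complex \<Rightarrow> nat \<Rightarrow> nat \<Rightarrow> complex" where
  "moebius_moment a n m = (if m \<le> n then (- a) ^ (n - m) else cnj ((- a) ^ (m - n)))"

lemma has_integral_power_mult_cnj_power:
  assumes u: "\<And>s. norm (u s) = 1" and w: "\<And>s. cnj (w s) = w s"
    and I: "\<And>j. ((\<lambda>s. w s * u s ^ j) has_integral (- a) ^ j) {0..1}"
  shows "((\<lambda>s. w s * (u s ^ n * cnj (u s) ^ m)) has_integral moebius_moment a n m) {0..1}"
proof -
  have unit: "u s * cnj (u s) = 1" for s
    using u[of s] by (simp flip: complex_norm_square)
  show ?thesis
  proof (cases "m \<le> n")
    case True
    then have "u s ^ n * cnj (u s) ^ m = u s ^ (n - m) * (u s * cnj (u s)) ^ m" for s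
      by (simp add: power_mult_distrib flip: power_add)
    then show ?thesis
      using I[of "n - m"] True by (simp add: unit moebius_moment_def)
  next
    case False
    then have "u s ^ n * cnj (u s) ^ m = cnj (u s ^ (m - n)) * (u s * cnj (u s)) ^ n" for s
      by (simp add: power_mult_distrib mult_ac flip: power_add)
    then have "w s * (u s ^ n * cnj (u s) ^ m) = cnj (w s * u s ^ (m - n))" for s
      using w[of s] by (simp add: unit)
    then show ?thesis
      using has_integral_cnj[THEN iffD2, OF I[of "m - n"]] False
      by (simp add: o_def moebius_moment_def)
  qed
qed

lemma has_integral_poly_mult_cnj_poly:
  assumes u: "\<And>s. norm (u s) = 1" and w: "\<And>s. cnj (w s) = w s"
    and I: "\<And>j. ((\<lambda>s. w s * u s ^ j) has_integral (- a) ^ j) {0..1}"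
  shows "((\<lambda>s. w s * ((\<Sum>n<N. p n * u s ^ n) * cnj (\<Sum>m<N. q m * u s ^ m))) has_integral
      (\<Sum>n<N. \<Sum>m<N. p n * cnj (q m) * moebius_moment a n m)) {0..1}"
proof -
  have "w s * ((\<Sum>n<N. p n * u s ^ n) * cnj (\<Sum>m<N. q m * u s ^ m)) =
      (\<Sum>n<N. \<Sum>m<N. p n * cnj (q m) * (w s * (u s ^ n * cnj (u s) ^ m)))" for s
    by (simp add: cnj_sum sum_product sum_distrib_left mult_ac) (rule sum.swap)
  moreover have "((\<lambda>s. \<Sum>n<N. \<Sum>m<N. p n * cnj (q m) * (w s * (u s ^ n * cnj (u s) ^ m))) has_integral
      (\<Sum>n<N. \<Sum>m<N. p n * cnj (q m) * moebius_moment a n m)) {0..1}"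
    by (intro has_integral_sum has_integral_mult_right has_integral_power_mult_cnj_power[OF u w I])
       simp_all
  ultimately show ?thesis
    by simp
qed

lemma unit_circle_integral_moebius_power:
  assumes a: "norm a < 1"
  shows "((\<lambda>s. moebius a (circlepath 0 1 s) ^ j) has_integral (- a) ^ j) {0..1}"
proof -
  obtain R where R: "1 < R" "\<And>z. norm z < R \<Longrightarrow> norm (cnj a * z) < 1"
    using exists_radius_cnj_mult_less_1[OF a] by blast
  then have "moebius a holomorphic_on ball 0 R"
    by (intro moebius_holomorphic) simp
  from unit_circle_integral_mean_value[OF holomorphic_on_power[OF this] R(1), of j] show ?thesis
    by simp
qed

text \<open>The weight is the Poisson kernel of the point \<open>- a\<close>.\<close>

lemma unit_circle_integral_szego_weight_power:
  assumes a: "norm a < 1"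
  defines "k \<equiv> szego_kernel (- a)"
  shows "((\<lambda>s. of_real (1 - (norm a)\<^sup>2) * (k (circlepath 0 1 s) * cnj (k (circlepath 0 1 s))) *
      circlepath 0 1 s ^ j) has_integral (- a) ^ j) {0..1}"
proof -
  obtain R where R: "1 < R" "\<And>z. norm z < R \<Longrightarrow> norm (cnj a * z) < 1"
    using exists_radius_cnj_mult_less_1[OF a] by blast
  then have k: "k holomorphic_on ball 0 R"
    unfolding k_def by (intro szego_kernel_holomorphic) (simp add: norm_mult)
  define \<gamma> where "\<gamma> = circlepath 0 1"
  define c where "c = complex_of_real (1 - (norm a)\<^sup>2)"
  have "((\<lambda>s. k (\<gamma> s) * \<gamma> s ^ j * \<gamma> s / (\<gamma> s - - a)) has_integral k (- a) * (- a) ^ j) {0..1}"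
    unfolding \<gamma>_def using a
    by (intro unit_circle_integral_cauchy[OF _ R(1)] holomorphic_intros k) simp
  from has_integral_mult_right[OF this, of c]
  have "((\<lambda>s. c * (k (\<gamma> s) * cnj (k (\<gamma> s))) * \<gamma> s ^ j) has_integral c * k (- a) * (- a) ^ j) {0..1}"
  proof (rule has_integral_eq_rhs[OF has_integral_eq, rotated])
    fix s
    have "\<gamma> s \<noteq> 0"
      by (simp add: \<gamma>_def)
    then have "cnj (k (\<gamma> s)) = \<gamma> s / (\<gamma> s - - a)"
      unfolding k_def szego_kernel_def \<gamma>_def by (simp add: cnj_circlepath_0_1 divide_simps)
    then show "c * (k (\<gamma> s) * \<gamma> s ^ j * \<gamma> s / (\<gamma> s - - a)) =
        c * (k (\<gamma> s) * cnj (k (\<gamma> s))) * \<gamma> s ^ j"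
      by (simp add: mult_ac)
  qed (simp add: mult.assoc)
  moreover have "c * k (- a) = 1"
  proof -
    have "(norm a)\<^sup>2 < 1"
      using a by (simp add: abs_square_less_1)
    then have "c \<noteq> 0"
      unfolding c_def by (simp only: of_real_eq_0_iff)
    moreover have "1 - cnj (- a) * - a = c"
      by (simp add: c_def mult.commute flip: complex_norm_square)
    ultimately show ?thesis
      by (simp add: k_def szego_kernel_def)
  qed
  ultimately show ?thesis
    by (simp add: c_def \<gamma>_def)
qed

lemma h2_inner_moebius_comp_poly:
  fixes N :: nat and p q :: "nat \<Rightarrow> complex"
  assumes a: "norm a < 1"
  defines "P \<equiv> \<lambda>z. \<Sum>n<N. p n * z ^ n" and "Q \<equiv> \<lambda>z. \<Sum>m<N. q m * z ^ m"
  shows "h2_inner (\<lambda>z. P (moebius a z)) (\<lambda>z. Q (moebius a z)) =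
      of_real (1 - (norm a)\<^sup>2) * h2_inner (\<lambda>z. szego_kernel (- a) z * P z) (\<lambda>z. szego_kernel (- a) z * Q z)"
proof -
  obtain R where R: "1 < R" "\<And>z. norm z < R \<Longrightarrow> norm (cnj a * z) < 1"
    using exists_radius_cnj_mult_less_1[OF a] by blast
  define \<gamma> where "\<gamma> = circlepath 0 1"
  define k where "k = szego_kernel (- a)"
  define c where "c = complex_of_real (1 - (norm a)\<^sup>2)"
  define S where "S = (\<Sum>n<N. \<Sum>m<N. p n * cnj (q m) * moebius_moment a n m)"
  have \<phi>: "moebius a holomorphic_on ball 0 R" and k: "k holomorphic_on ball 0 R"
    using R(2) by (auto intro!: moebius_holomorphic szego_kernel_holomorphic simp: k_def norm_mult)
  have "((\<lambda>s. 1 * (P (moebius a (\<gamma> s)) * cnj (Q (moebius a (\<gamma> s))))) has_integral S) {0..1}"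
    unfolding P_def Q_def S_def \<gamma>_def
    by (rule has_integral_poly_mult_cnj_poly)
       (use a unit_circle_integral_moebius_power[OF a] in \<open>simp_all add: norm_moebius_eq_1\<close>)
  moreover have "((\<lambda>s. P (moebius a (\<gamma> s)) * cnj (Q (moebius a (\<gamma> s)))) has_integral
      h2_inner (\<lambda>z. P (moebius a z)) (\<lambda>z. Q (moebius a z))) {0..1}"
    unfolding \<gamma>_def P_def Q_def
    by (intro h2_inner_eq_unit_circle_integral[OF _ _ R(1)] holomorphic_intros
        holomorphic_on_compose[OF \<phi>, unfolded o_def])
  ultimately have lhs: "h2_inner (\<lambda>z. P (moebius a z)) (\<lambda>z. Q (moebius a z)) = S"
    by (simp add: has_integral_unique)
  have "((\<lambda>s. c * (k (\<gamma> s) * cnj (k (\<gamma> s))) * (P (\<gamma> s) * cnj (Q (\<gamma> s)))) has_integral S) {0..1}"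
    unfolding P_def Q_def S_def \<gamma>_def
    by (rule has_integral_poly_mult_cnj_poly)
       (use unit_circle_integral_szego_weight_power[OF a] in \<open>simp_all add: c_def k_def\<close>)
  moreover have "((\<lambda>s. c * (k (\<gamma> s) * cnj (k (\<gamma> s))) * (P (\<gamma> s) * cnj (Q (\<gamma> s)))) has_integral
      c * h2_inner (\<lambda>z. k z * P z) (\<lambda>z. k z * Q z)) {0..1}"
  proof -
    have "((\<lambda>s. k (\<gamma> s) * P (\<gamma> s) * cnj (k (\<gamma> s) * Q (\<gamma> s))) has_integral
        h2_inner (\<lambda>z. k z * P z) (\<lambda>z. k z * Q z)) {0..1}"
      unfolding \<gamma>_def P_def Q_def
      by (intro h2_inner_eq_unit_circle_integral[OF _ _ R(1)] holomorphic_intros k)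
    from has_integral_mult_right[OF this, of c] show ?thesis
      by (simp add: mult_ac)
  qed
  ultimately show ?thesis
    using lhs has_integral_unique by (simp add: c_def k_def)
qed

lemma H2_moebius_comp_taylor_poly:
  assumes a: "norm a < 1" and f: "f \<in> H2"
  shows "(\<lambda>z. taylor_poly f N (moebius a z)) \<in> H2"
    and "h2_norm2 (\<lambda>z. taylor_poly f N (moebius a z)) \<le> (1 / (1 - norm a))\<^sup>2 * h2_norm2 f"
proof -
  define V where "V = (\<lambda>z. taylor_poly f N (moebius a z))"
  define K where "K = (\<lambda>z. szego_kernel (- a) z * taylor_poly f N z)"
  show V: "V \<in> H2"
    unfolding V_def
  proof (rule H2_bounded[OF holomorphic_on_moebius_comp[OF a]])
    show "taylor_poly f N holomorphic_on ball 0 1"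
      by (simp add: taylor_poly_def[abs_def] holomorphic_intros)
    fix z :: complex
    assume "norm z < 1"
    then have "norm (moebius a z) \<le> 1"
      using norm_moebius_less_1[OF a] less_imp_le by blast
    then show "norm (taylor_poly f N (moebius a z)) \<le> (\<Sum>n<N. norm (taylor_coeff f n))"
      unfolding taylor_poly_def
      by (intro order.trans[OF norm_sum] sum_mono)
         (simp add: norm_mult norm_power mult_left_le power_le_one)
  qed
  have K: "K \<in> H2" "h2_norm2 K \<le> (1 / (1 - norm a))\<^sup>2 * h2_norm2 (taylor_poly f N)"
    using H2_mult_szego_kernel[of "- a", OF _ H2_taylor_poly] a by (simp_all add: K_def)
  have "h2_inner V V = of_real (1 - (norm a)\<^sup>2) * h2_inner K K"
    unfolding V_def K_def taylor_poly_def by (rule h2_inner_moebius_comp_poly[OF a])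
  then have "complex_of_real (h2_norm2 V) = of_real (1 - (norm a)\<^sup>2) * of_real (h2_norm2 K)"
    by (simp only: h2_inner_self[OF V] h2_inner_self[OF K(1)])
  then have "h2_norm2 V = (1 - (norm a)\<^sup>2) * h2_norm2 K"
    by (simp only: of_real_mult[symmetric] of_real_eq_iff)
  also have "\<dots> \<le> h2_norm2 K"
    using h2_norm2_nonneg[OF K(1)] a by (intro mult_left_le_one_le) (auto simp: abs_square_le_1)
  also have "\<dots> \<le> (1 / (1 - norm a))\<^sup>2 * h2_norm2 f"
    using K(2) mult_left_mono[OF h2_norm2_taylor_poly_le[OF f, of N], of "(1 / (1 - norm a))\<^sup>2"]
    by simp
  finally show "h2_norm2 V \<le> (1 / (1 - norm a))\<^sup>2 * h2_norm2 f" .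
qed

lemma H2_moebius_comp:
  assumes a: "norm a < 1" and f: "f \<in> H2"
  shows "(\<lambda>z. f (moebius a z)) \<in> H2"
    and "h2_norm2 (\<lambda>z. f (moebius a z)) \<le> 2 * (1 / (1 - norm a))\<^sup>2 * h2_norm2 f"
proof -
  define C where "C = (1 / (1 - norm a))\<^sup>2"
  have V: "(\<lambda>z. f (moebius a z)) holomorphic_on ball 0 1"
    by (rule holomorphic_on_moebius_comp[OF a H2_imp_holomorphic[OF f]])
  have "(\<Sum>n. (norm (taylor_coeff (\<lambda>z. f (moebius a z)) n))\<^sup>2 * r ^ (2 * n)) \<le> 2 * C * h2_norm2 f"
    if r: "0 < r" "r < 1" for r
  proof -
    obtain \<rho> where \<rho>: "\<rho> < 1" "\<And>z. norm z \<le> r \<Longrightarrow> norm (moebius a z) \<le> \<rho>"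
      using norm_moebius_bounded_on_cball[OF a _ r(2)] r(1) by auto
    have "norm (moebius a 0) \<le> \<rho>"
      using \<rho>(2)[of 0] r(1) by simp
    then have "0 \<le> \<rho>"
      by (rule order.trans[OF norm_ge_zero])
    define E where "E N = (\<Sum>k. norm (taylor_coeff f (k + N)) * \<rho> ^ (k + N))" for N
    have bound: "(\<Sum>n. (norm (taylor_coeff (\<lambda>z. f (moebius a z)) n))\<^sup>2 * r ^ (2 * n)) \<le>
        2 * C * h2_norm2 f + 2 * (E N)\<^sup>2" for N
    proof -
      define VN where "VN = (\<lambda>z. taylor_poly f N (moebius a z))"
      have VN: "VN \<in> H2" "h2_norm2 VN \<le> C * h2_norm2 f"
        unfolding VN_def C_def using H2_moebius_comp_taylor_poly[OF a f] by auto
      have "(\<Sum>n. (norm (taylor_coeff (\<lambda>z. f (moebius a z)) n))\<^sup>2 * r ^ (2 * n)) \<le>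
          2 * (\<Sum>n. (norm (taylor_coeff VN n))\<^sup>2 * r ^ (2 * n)) + 2 * (E N)\<^sup>2"
        unfolding E_def VN_def using r
        by (intro circle_mean_le_of_norm_diff_le V H2_imp_holomorphic[OF VN(1), unfolded VN_def]
            norm_diff_taylor_poly_le H2_imp_holomorphic[OF f] \<open>0 \<le> \<rho>\<close> \<rho>) simp_all
      also have "\<dots> \<le> 2 * (C * h2_norm2 f) + 2 * (E N)\<^sup>2"
        using circle_mean_le_h2_norm2[OF VN(1) r] VN(2) by simp
      finally show ?thesis
        by simp
    qed
    have "E \<longlonglongrightarrow> 0"
      unfolding E_def using summable_norm_taylor_coeff[OF H2_imp_holomorphic[OF f] \<open>0 \<le> \<rho>\<close> \<rho>(1)]
      by (rule suminf_exist_split2)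
    then have "(\<lambda>N. 2 * C * h2_norm2 f + 2 * (E N)\<^sup>2) \<longlonglongrightarrow> 2 * C * h2_norm2 f + 2 * 0\<^sup>2"
      by (intro tendsto_intros)
    then show ?thesis
      using bound by (intro LIMSEQ_le_const) auto
  qed
  then show "(\<lambda>z. f (moebius a z)) \<in> H2"
    and "h2_norm2 (\<lambda>z. f (moebius a z)) \<le> 2 * C * h2_norm2 f"
    using H2_of_circle_mean_bounded[OF V, of 0] by auto
qed

lemma h2_inner_moebius_comp:
  assumes a: "norm a < 1" and f: "f \<in> H2" and g: "g \<in> H2"
  shows "h2_inner (\<lambda>z. f (moebius a z)) (\<lambda>z. g (moebius a z)) =
      of_real (1 - (norm a)\<^sup>2) * h2_inner (\<lambda>z. szego_kernel (- a) z * f z) (\<lambda>z. szego_kernel (- a) z * g z)"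
proof (rule LIMSEQ_unique)
  show "(\<lambda>N. h2_inner (\<lambda>z. taylor_poly f N (moebius a z)) (\<lambda>z. taylor_poly g N (moebius a z)))
      \<longlonglongrightarrow> h2_inner (\<lambda>z. f (moebius a z)) (\<lambda>z. g (moebius a z))"
    using h2_inner_tendsto_taylor_poly[where T = "\<lambda>h z. h (moebius a z)", OF H2_moebius_comp(1)[OF a]
        H2_moebius_comp(2)[OF a] _ _ f g]
    by simp
  have "(\<lambda>N. h2_inner (\<lambda>z. szego_kernel (- a) z * taylor_poly f N z) (\<lambda>z. szego_kernel (- a) z * taylor_poly g N z))
      \<longlonglongrightarrow> h2_inner (\<lambda>z. szego_kernel (- a) z * f z) (\<lambda>z. szego_kernel (- a) z * g z)"
    using h2_inner_tendsto_taylor_poly[where T = "\<lambda>h z. szego_kernel (- a) z * h z",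
        OF H2_mult_szego_kernel(1) H2_mult_szego_kernel(2) _ _ f g] a
    by (simp add: right_diff_distrib)
  then show "(\<lambda>N. h2_inner (\<lambda>z. taylor_poly f N (moebius a z)) (\<lambda>z. taylor_poly g N (moebius a z)))
      \<longlonglongrightarrow> of_real (1 - (norm a)\<^sup>2) *
        h2_inner (\<lambda>z. szego_kernel (- a) z * f z) (\<lambda>z. szego_kernel (- a) z * g z)"
    unfolding taylor_poly_def h2_inner_moebius_comp_poly[OF a] by (intro tendsto_intros)
qed

lemma moebius_comp_orthogonal:
  assumes \<Theta>: "\<Theta> holomorphic_on ball 0 1" and M: "\<And>z. norm z < 1 \<Longrightarrow> norm (\<Theta> z) \<le> M"
    and f: "f \<in> model_space \<Theta>" and a: "norm a < 1" and "\<Theta> (- a) \<noteq> 0" and h: "h \<in> H2"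
  defines "c \<equiv> f 0 + h2_inner f (\<lambda>z. z * diff_quot \<Theta> (- a) z) / cnj (\<Theta> (- a))"
  shows "h2_inner (\<lambda>z. f (moebius a z) - c) (\<lambda>z. \<Theta> (moebius a z) * h z) = 0"
proof -
  have a': "norm (- a) < 1"
    using a by simp
  have F: "(\<lambda>z. f z - c) \<in> H2"
    using f by (auto intro: H2_diff H2_const simp: model_space_def)
  define u where "u = (\<lambda>z. h (moebius (- a) z))"
  have u: "u \<in> H2"
    unfolding u_def by (rule H2_moebius_comp(1)[OF a' h])
  have "h2_inner (\<lambda>z. f (moebius a z) - c) (\<lambda>z. \<Theta> (moebius a z) * h z) =
      h2_inner (\<lambda>z. f (moebius a z) - c) (\<lambda>z. \<Theta> (moebius a z) * u (moebius a z))"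
    by (intro h2_inner_cong) (auto simp: u_def moebius_uminus_moebius[OF a])
  also have "\<dots> = of_real (1 - (norm a)\<^sup>2) *
      h2_inner (\<lambda>z. szego_kernel (- a) z * (f z - c)) (\<lambda>z. \<Theta> z * (szego_kernel (- a) z * u z))"
    using h2_inner_moebius_comp[OF a F H2_mult_bounded(1)[OF \<Theta> M u]] by (simp add: mult_ac)
  also have "h2_inner (\<lambda>z. szego_kernel (- a) z * (f z - c)) (\<lambda>z. \<Theta> z * (szego_kernel (- a) z * u z)) = 0"
    unfolding c_def
    by (rule szego_kernel_mult_orthogonal[OF \<Theta> M f a' \<open>\<Theta> (- a) \<noteq> 0\<close> H2_mult_szego_kernel(1)[OF a' u]])
  finally show ?thesis
    by simp
qed

theorem lemma2p4:
  fixes \<Theta> f :: "complex \<Rightarrow> complex" and a :: complex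
  assumes "inner_fun \<Theta>"
    and "a \<in> unit_disc" and "a \<noteq> 0"
    and "\<Theta> (- a) \<noteq> 0"
    and "f \<in> model_space \<Theta>"
  shows "\<exists>c::complex. (\<lambda>z. f (moebius a z) - c) \<in> model_space (\<Theta> \<circ> moebius a)"
proof -
  obtain M where \<Theta>: "\<Theta> holomorphic_on ball 0 1" and "\<forall>z\<in>ball 0 1. norm (\<Theta> z) \<le> M"
    using assms(1) unfolding inner_fun_def by blast
  then have M: "\<And>z. norm z < 1 \<Longrightarrow> norm (\<Theta> z) \<le> M"
    by simp
  have a: "norm a < 1"
    using assms(2) by simp
  define c where "c = f 0 + h2_inner f (\<lambda>z. z * diff_quot \<Theta> (- a) z) / cnj (\<Theta> (- a))"
  have "(\<lambda>z. f z - c) \<in> H2"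
    using assms(5) by (auto intro: H2_diff H2_const simp: model_space_def)
  from H2_moebius_comp(1)[OF a this] have "(\<lambda>z. f (moebius a z) - c) \<in> H2"
    by simp
  moreover have "h2_inner (\<lambda>z. f (moebius a z) - c) (\<lambda>z. (\<Theta> \<circ> moebius a) z * h z) = 0"
    if "h \<in> H2" for h
    using moebius_comp_orthogonal[OF \<Theta> M assms(5) a assms(4) that] by (simp add: c_def)
  ultimately show ?thesis
    by (auto simp: model_space_def)
qed

end
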